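(* Let $\mathcal{E}:\mathbb{R}^N\to\mathbb{R}^F$ and $\mathcal{D}:\mathbb{R}^F\to\mathbb{R}^N$ be maps, let $0<\alpha<1$, $\lambda>0$, $\beta>0$, let $\rho$ be a real number with $0<\rho<2\beta$, and let ${\bm x}\in\mathbb{R}^N$. Assume $\mathcal{T}:\mathbb{R}^F\to\mathbb{R}^F$, $\mathcal{T}(\cdot)=\mathcal{E}(\mathcal{D}(\cdot))-\mathcal{E}({\bm x})$, is continuous. Let sequences $({\bm z}^k)$ and $({\bm y}^k)$ in $\mathbb{R}^F$ satisfy, for $k=0,1,\dots$ (with given starting points ${\bm z}^{-1},{\bm z}^0$), $$ {\bm y}^k={\bm z}^k+\alpha({\bm z}^k-{\bm z}^{k-1}),\qquad {\bm z}^{k+1}={\bm y}^k-2\lambda\beta\,\mathcal{T}{\bm y}^k. $$ Assume ${\bm z}^\star\in\mathbb{R}^F$ satisfies $\mathcal{T}{\bm z}^\star=0$ and $\langle \mathcal{T}{\bm y}^k,{\bm y}^k-{\bm z}^\star\rangle\ge\beta\|\mathcal{T}{\bm y}^k\|^2$ for $k=0,1,\dots$. Set $\nu=\lambda^{-1}-1$, $\delta^k=\nu(1-\alpha)\|{\bm z}^k-{\bm z}^{k-1}\|^2$ and $\Delta^k({\bm z}^\star)=\|{\bm z}^k-{\bm z}^\star\|^2-\|{\bm z}^{k-1}-{\bm z}^\star\|^2$. Then for $k=1,2,\dots$, $$\Delta^{k+1}({\bm z}^\star)+\delta^{k+1}+\nu\alpha\|{\bm z}^{k+1}-2{\bm z}^k+{\bm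 z}^{k-1}\|^2\ \le\ \alpha\,\Delta^k({\bm z}^\star)+\big[\alpha(1+\alpha)+\nu\alpha(1-\alpha)\big]\|{\bm z}^k-{\bm z}^{k-1}\|^2.$$
   Context: $\langle\cdot,\cdot\rangle$ and $\|\cdot\|$ denote the Euclidean inner product and norm on $\mathbb{R}^F$. The maps $\mathcal{E}$ and $\mathcal{D}$ are arbitrary maps between the indicated spaces. *)

theory Defs
  imports "HOL-Analysis.Analysis"
begin

end

theory Submission
  imports Defs
begin

text \<open>Put \<open>a = z k - z\<^sup>\<star>\<close>, \<open>b = z (k - 1) - z\<^sup>\<star>\<close>, \<open>c = z (k + 1) - z\<^sup>\<star>\<close> and
  \<open>w = y k - z\<^sup>\<star> = (1 + \<alpha>) a - \<alpha> b\<close>. Expanding the squares, the claimed inequality is exactly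
  \<open>\<parallel>c\<parallel>\<^sup>2 + \<nu> \<parallel>c - w\<parallel>\<^sup>2 \<le> \<parallel>w\<parallel>\<^sup>2\<close>, an estimate for the single forward step
  \<open>c = w - 2\<lambda>\<beta> T (y k)\<close>: its defect is \<open>-4\<lambda>\<beta> (\<langle>T (y k), w\<rangle> - \<beta> \<parallel>T (y k)\<parallel>\<^sup>2) \<le> 0\<close>.\<close>

lemma norm_forward_step_le:
  fixes w T :: "'a::real_inner" and lam \<beta> :: real
  assumes "0 < lam" "0 \<le> \<beta>" "\<beta> * (norm T)\<^sup>2 \<le> inner T w"
  shows "(norm (w - (2 * lam * \<beta>) *\<^sub>R T))\<^sup>2 + (1 / lam - 1) * (norm ((2 * lam * \<beta>) *\<^sub>R T))\<^sup>2
           \<le> (norm w)\<^sup>2"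
proof -
  have "(norm (w - (2 * lam * \<beta>) *\<^sub>R T))\<^sup>2
          = (norm w)\<^sup>2 - 4 * lam * \<beta> * inner T w + 4 * lam\<^sup>2 * \<beta>\<^sup>2 * (norm T)\<^sup>2"
    unfolding power2_norm_eq_inner
    by (simp add: inner_simps inner_commute algebra_simps power2_eq_square)
  moreover have "(1 / lam - 1) * (norm ((2 * lam * \<beta>) *\<^sub>R T))\<^sup>2
          = 4 * lam * \<beta>\<^sup>2 * (norm T)\<^sup>2 - 4 * lam\<^sup>2 * \<beta>\<^sup>2 * (norm T)\<^sup>2"
    using \<open>0 < lam\<close> by (simp add: power_mult_distrib field_simps power2_eq_square)
  moreover have "4 * lam * \<beta> * (\<beta> * (norm T)\<^sup>2) \<le> 4 * lam * \<beta> * inner T w"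
    using assms by (intro mult_left_mono) auto
  ultimately show ?thesis
    by (simp add: algebra_simps power2_eq_square)
qed

lemma inertial_energy_identity:
  fixes a b c :: "'a::real_inner" and \<alpha> \<nu> :: real
  defines "w \<equiv> (1 + \<alpha>) *\<^sub>R a - \<alpha> *\<^sub>R b"
  shows "(norm c)\<^sup>2 - (norm a)\<^sup>2 + \<nu> * (1 - \<alpha>) * (norm (c - a))\<^sup>2
           + \<nu> * \<alpha> * (norm (c - 2 *\<^sub>R a + b))\<^sup>2
         = \<alpha> * ((norm a)\<^sup>2 - (norm b)\<^sup>2) + (\<alpha> * (1 + \<alpha>) + \<nu> * \<alpha> * (1 - \<alpha>)) * (norm (a - b))\<^sup>2
           + ((norm c)\<^sup>2 + \<nu> * (norm (c - w))\<^sup>2 - (norm w)\<^sup>2)"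
  unfolding w_def power2_norm_eq_inner
  by (simp add: inner_simps inner_commute algebra_simps)

theorem lemmaS1:
  fixes E :: "real^'n \<Rightarrow> real^'f" and D :: "real^'f \<Rightarrow> real^'n"
    and \<alpha> lam \<beta> \<rho> :: real and x :: "real^'n"
    and z y :: "int \<Rightarrow> real^'f" and zs :: "real^'f" and k :: int
  assumes "0 < \<alpha>" "\<alpha> < 1" "lam > 0" "\<beta> > 0" "0 < \<rho>" "\<rho> < 2 * \<beta>"
    and cont: "continuous_on UNIV (\<lambda>v. E (D v) - E x)"
    and yk: "\<And>j. j \<ge> 0 \<Longrightarrow> y j = z j + \<alpha> *\<^sub>R (z j - z (j - 1))"
    and zk: "\<And>j. j \<ge> 0 \<Longrightarrow> z (j + 1) = y j - (2 * lam * \<beta>) *\<^sub>R (E (D (y j)) - E x)"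
    and zfix: "E (D zs) - E x = 0"
    and coco: "\<And>j. j \<ge> 0 \<Longrightarrow>
        inner (E (D (y j)) - E x) (y j - zs) \<ge> \<beta> * (norm (E (D (y j)) - E x))\<^sup>2"
    and k: "k \<ge> 1"
  shows "((norm (z (k + 1) - zs))\<^sup>2 - (norm (z k - zs))\<^sup>2)
           + (1 / lam - 1) * (1 - \<alpha>) * (norm (z (k + 1) - z k))\<^sup>2
           + (1 / lam - 1) * \<alpha> * (norm (z (k + 1) - 2 *\<^sub>R z k + z (k - 1)))\<^sup>2
         \<le> \<alpha> * ((norm (z k - zs))\<^sup>2 - (norm (z (k - 1) - zs))\<^sup>2)
           + (\<alpha> * (1 + \<alpha>) + (1 / lam - 1) * \<alpha> * (1 - \<alpha>)) * (norm (z k - z (k - 1)))\<^sup>2"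
proof -
  define a b c where "a = z k - zs" and "b = z (k - 1) - zs" and "c = z (k + 1) - zs"
  define T where "T = E (D (y k)) - E x"
  have "k \<ge> 0" using k by simp
  have w: "y k - zs = (1 + \<alpha>) *\<^sub>R a - \<alpha> *\<^sub>R b"
    unfolding a_def b_def yk[OF \<open>k \<ge> 0\<close>] by (simp add: algebra_simps)
  have c: "c = (y k - zs) - (2 * lam * \<beta>) *\<^sub>R T"
    unfolding c_def T_def zk[OF \<open>k \<ge> 0\<close>] by simp
  have "(norm c)\<^sup>2 + (1 / lam - 1) * (norm (c - (y k - zs)))\<^sup>2 \<le> (norm (y k - zs))\<^sup>2"
    using norm_forward_step_le[of lam \<beta> T "y k - zs"] coco[OF \<open>k \<ge> 0\<close>] \<open>lam > 0\<close> \<open>\<beta> > 0\<close>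
    unfolding c T_def by simp
  moreover have "z (k + 1) - z k = c - a" "z (k + 1) - 2 *\<^sub>R z k + z (k - 1) = c - 2 *\<^sub>R a + b"
    "z k - z (k - 1) = a - b"
    unfolding a_def b_def c_def by (simp_all add: algebra_simps scaleR_2)
  ultimately show ?thesis
    using inertial_energy_identity[of c a "1 / lam - 1" \<alpha> b]
    unfolding a_def [symmetric] b_def [symmetric] c_def [symmetric] w by simp
qed

end
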